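(* Let $q$ be a prime power, let $\mathbb{F}_q$ be the field with $q$ elements, let $d \ge 4$, and let $a_1,\ldots,a_d \in \mathbb{F}_q\setminus\{0\}$ satisfy $a_1+\cdots+a_d = 0$. There exists a constant $c_q < q$ such that for all sufficiently large $n$, every set $A \subset \mathbb{F}_q^n$ with $|A| > c_q^n$ contains pairwise distinct elements $x_1,\ldots,x_d \in A$ satisfying \[ a_1x_1 + a_2x_2 + \cdots + a_dx_d = 0. \] *)

theory Defs
  imports Complex_Main
begin

text \<open>The vector space F^n, represented as functions nat => F that vanish
outside the coordinates 0..n-1.\<close>
definition fvecs :: "nat \<Rightarrow> (nat \<Rightarrow> 'a::zero) set" where
  "fvecs n = {x. \<forall>i\<ge>n. x i = 0}"

end

(*
  Write q for the size of the field F. For x, y, z in F^n the product over all coordinates of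
  1 - (x_i + y_i + z_i)^(q - 1) is 1 if x + y + z = 0 and 0 otherwise. Each monomial of its
  expansion has total degree at most (q - 1) n, hence degree at most (q - 1) n / 3 in one of
  x, y, z; grouping the monomials accordingly writes this tensor as a sum of slices indexed by
  exponent vectors of low degree, of which there are at most G^n for some G < q. Since the slice
  rank of a diagonal tensor is its size, a tricolored sum-free family in F^n (triples with
  x_s + y_s + z_s = 0 such that x_s1 + y_s2 + z_s3 = 0 forces s1 = s2 = s3) has at most 3 G^n
  members.

  Sets without a solution in distinct vectors are bounded by induction on the number of
  variables. For three variables the set itself is tricolored sum-free. Otherwise two
  coefficients with nonzero sum are merged, or a pair of cancelling coefficients is dropped, and
  the set is packed greedily with disjoint blocks solving the smaller equation until the rest is
  too small to contain one. Pieces of three different blocks combine into a distinct solution of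
  the original equation, so the blocks again form a tricolored sum-free family. Four variables
  whose coefficients cancel in pairs are handled by the same packing with blocks of two vectors.
*)

theory Submission
  imports Defs "HOL-Library.Cardinality" "HOL-Library.FuncSet" "HOL-Library.Disjoint_Sets"
begin

lemma two_le_card_field: "2 \<le> card (UNIV :: 'a::{field,finite} set)"
proof -
  have "card {0::'a, 1} \<le> CARD('a)" by (rule card_mono) auto
  then show ?thesis by simp
qed

lemma power_card_minus_one_eq_one:
  fixes x :: "'a::{field,finite}"
  assumes "x \<noteq> 0"
  shows "x ^ (CARD('a) - 1) = 1"
proof -
  let ?U = "UNIV - {0::'a}"
  have "(\<Prod>y\<in>?U. x * y) = (\<Prod>y\<in>?U. y)"
    by (rule prod.reindex_bij_witness[of _ "\<lambda>y. y / x" "\<lambda>y. x * y"]) (use assms in auto)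
  then have "x ^ card ?U * (\<Prod>y\<in>?U. y) = 1 * (\<Prod>y\<in>?U. y)"
    by (simp add: prod.distrib)
  moreover have "(\<Prod>y\<in>?U. y) \<noteq> 0" by simp
  ultimately have "x ^ card ?U = 1" by (metis mult_cancel_right)
  then show ?thesis by (simp add: card_Diff_singleton)
qed

lemma zero_indicator_eq_one_minus_power:
  fixes x :: "'a::{field,finite}"
  shows "(if x = 0 then 1 else 0) = 1 - x ^ (CARD('a) - 1)"
  using power_card_minus_one_eq_one[of x] two_le_card_field[where 'a = 'a] by auto

lemma one_minus_trinomial_power_expansion:
  obtains E :: "(nat \<times> nat) option set" and \<alpha> \<beta> \<gamma> :: "(nat \<times> nat) option \<Rightarrow> nat"
    and c :: "(nat \<times> nat) option \<Rightarrow> 'a::comm_ring_1"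
  where "finite E" "\<And>e. e \<in> E \<Longrightarrow> \<alpha> e + \<beta> e + \<gamma> e \<le> m"
    "\<And>x y z. 1 - (x + y + z) ^ m = (\<Sum>e\<in>E. c e * x ^ \<alpha> e * y ^ \<beta> e * z ^ \<gamma> e)"
proof
  \<comment> \<open>\<open>None\<close> indexes the constant term, \<open>Some (k, l)\<close> the monomial \<open>x ^ k * y ^ l * z ^ (m - k - l)\<close>.\<close>
  define D where "D = (SIGMA k:{..m}. {..m - k})"
  define E where "E = insert None (Some ` D)"
  define \<alpha> :: "(nat \<times> nat) option \<Rightarrow> nat" where "\<alpha> = case_option 0 fst"
  define \<beta> :: "(nat \<times> nat) option \<Rightarrow> nat" where "\<beta> = case_option 0 snd"
  define \<gamma> :: "(nat \<times> nat) option \<Rightarrow> nat" where "\<gamma> = case_option 0 (\<lambda>(k, l). m - k - l)"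
  define c :: "(nat \<times> nat) option \<Rightarrow> 'a" where
    "c = case_option 1 (\<lambda>(k, l). - (of_nat (m choose k) * of_nat ((m - k) choose l)))"
  show "finite E" by (simp add: E_def D_def)
  show "\<alpha> e + \<beta> e + \<gamma> e \<le> m" if "e \<in> E" for e
    using that by (auto simp: E_def D_def \<alpha>_def \<beta>_def \<gamma>_def)
  fix x y z :: 'a
  have "(x + y + z) ^ m = (\<Sum>k\<le>m. of_nat (m choose k) * x ^ k * (y + z) ^ (m - k))"
    by (simp add: add.assoc binomial_ring)
  also have "\<dots> = (\<Sum>k\<le>m. \<Sum>l\<le>m - k. of_nat (m choose k) * of_nat ((m - k) choose l)
      * x ^ k * y ^ l * z ^ (m - k - l))"
    by (simp add: binomial_ring sum_distrib_left mult.assoc mult.left_commute)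
  also have "\<dots> = (\<Sum>(k, l)\<in>D. of_nat (m choose k) * of_nat ((m - k) choose l)
      * x ^ k * y ^ l * z ^ (m - k - l))"
    by (simp add: D_def sum.Sigma)
  also have "\<dots> = - (\<Sum>e\<in>Some ` D. c e * x ^ \<alpha> e * y ^ \<beta> e * z ^ \<gamma> e)"
    by (subst sum.reindex) (auto simp: c_def \<alpha>_def \<beta>_def \<gamma>_def sum_negf split_beta)
  finally show "1 - (x + y + z) ^ m = (\<Sum>e\<in>E. c e * x ^ \<alpha> e * y ^ \<beta> e * z ^ \<gamma> e)"
    by (simp add: E_def D_def c_def \<alpha>_def \<beta>_def \<gamma>_def)
qed

lemma zero_indicator_sum3_expansion:
  obtains E :: "(nat \<times> nat) option set" and \<alpha> \<beta> \<gamma> :: "(nat \<times> nat) option \<Rightarrow> nat"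
    and c :: "(nat \<times> nat) option \<Rightarrow> 'a::{field,finite}"
  where "finite E" "\<And>e. e \<in> E \<Longrightarrow> \<alpha> e + \<beta> e + \<gamma> e \<le> CARD('a) - 1"
    "\<And>x y z. (if x + y + z = 0 then 1 else 0) = (\<Sum>e\<in>E. c e * x ^ \<alpha> e * y ^ \<beta> e * z ^ \<gamma> e)"
proof -
  obtain E :: "(nat \<times> nat) option set" and \<alpha> \<beta> \<gamma> and c :: "(nat \<times> nat) option \<Rightarrow> 'a"
    where fin: "finite E" and deg: "\<And>e. e \<in> E \<Longrightarrow> \<alpha> e + \<beta> e + \<gamma> e \<le> CARD('a) - 1"
    and expansion: "\<And>x y z :: 'a. 1 - (x + y + z) ^ (CARD('a) - 1) = (\<Sum>e\<in>E. c e * x ^ \<alpha> e * y ^ \<beta> e * z ^ \<gamma> e)"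
    using one_minus_trinomial_power_expansion[where m = "CARD('a) - 1"] by blast
  have "(if x + y + z = 0 then 1 else 0) = (\<Sum>e\<in>E. c e * x ^ \<alpha> e * y ^ \<beta> e * z ^ \<gamma> e)"
    for x y z :: 'a
    by (simp only: zero_indicator_eq_one_minus_power expansion)
  with fin deg show thesis by (rule that)
qed

section \<open>Slice rank of a diagonal tensor\<close>

lemma card_le_of_identity_factorization:
  fixes u v :: "'k \<Rightarrow> 's \<Rightarrow> 'a::field"
  assumes "finite K" "finite S"
    and "\<And>x y. x \<in> S \<Longrightarrow> y \<in> S \<Longrightarrow> (if x = y then 1 else 0) = (\<Sum>k\<in>K. u k x * v k y)"
  shows "card S \<le> card K"
  using assms
proof (induction K arbitrary: S u rule: finite_induct)
  case empty
  then show ?case by (metis card.empty le_refl one_neq_zero subsetI subset_empty sum.empty)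
next
  case (insert k0 K)
  show ?case
  proof (cases "\<forall>s\<in>S. u k0 s = 0")
    case True
    then have "card S \<le> card K" using insert by (intro insert.IH) auto
    then show ?thesis using insert by simp
  next
    case False
    then obtain s0 where s0: "s0 \<in> S" "u k0 s0 \<noteq> 0" by blast
    \<comment> \<open>Gaussian elimination: subtracting a multiple of row \<open>s0\<close> kills the \<open>k0\<close>-th column.\<close>
    define u' where "u' k x = u k x - u k0 x / u k0 s0 * u k s0" for k x
    have "card (S - {s0}) \<le> card K"
    proof (rule insert.IH)
      fix x y assume xy: "x \<in> S - {s0}" "y \<in> S - {s0}"
      have "(\<Sum>k\<in>K. u' k x * v k y) = (\<Sum>k\<in>insert k0 K. u' k x * v k y)"
        using insert s0 by (simp add: u'_def)
      also have "\<dots> = (\<Sum>k\<in>insert k0 K. u k x * v k y)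
          - u k0 x / u k0 s0 * (\<Sum>k\<in>insert k0 K. u k s0 * v k y)"
        by (simp add: u'_def algebra_simps sum_subtractf sum_distrib_left)
      also have "\<dots> = (if x = y then 1 else 0)"
        using insert.prems(2)[of x y] insert.prems(2)[of s0 y] xy s0 by auto
      finally show "(if x = y then 1 else 0) = (\<Sum>k\<in>K. u' k x * v k y)" by simp
    qed (use insert in auto)
    then show ?thesis using insert s0 by (simp add: card_Diff_singleton)
  qed
qed

lemma card_le_of_two_slice_decomposition:
  fixes fa fb :: "'k \<Rightarrow> 's \<Rightarrow> 'a::field"
  assumes "finite S" "finite K1" "finite K2"
    and "\<And>x y z. x \<in> S \<Longrightarrow> y \<in> S \<Longrightarrow> z \<in> S \<Longrightarrow>
      (if x = y \<and> y = z then 1 else 0) = (\<Sum>k\<in>K1. fa k x * ga k y z) + (\<Sum>k\<in>K2. fb k y * gb k x z)"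
  shows "card S \<le> card K1 + card K2"
proof -
  \<comment> \<open>Summing out \<open>z\<close> leaves a factorization of the identity matrix through \<open>K1 <+> K2\<close>.\<close>
  define u where "u k x = (case k of Inl k1 \<Rightarrow> fa k1 x | Inr k2 \<Rightarrow> (\<Sum>z\<in>S. gb k2 x z))" for k x
  define v where "v k y = (case k of Inl k1 \<Rightarrow> (\<Sum>z\<in>S. ga k1 y z) | Inr k2 \<Rightarrow> fb k2 y)" for k y
  have "card S \<le> card (K1 <+> K2)"
  proof (rule card_le_of_identity_factorization)
    fix x y assume xy: "x \<in> S" "y \<in> S"
    have "(if x = y then 1 else 0) = (\<Sum>z\<in>S. if x = y \<and> y = z then 1 else (0::'a))"
      using xy assms(1) by simp
    also have "\<dots> = (\<Sum>z\<in>S. (\<Sum>k\<in>K1. fa k x * ga k y z) + (\<Sum>k\<in>K2. fb k y * gb k x z))"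
      using assms(4) xy by (intro sum.cong) auto
    also have "\<dots> = (\<Sum>k\<in>K1 <+> K2. u k x * v k y)"
      using assms(2,3) by (simp add: sum.distrib sum_distrib_left sum_distrib_right sum.swap[of _ S]
          mult.commute sum.Plus u_def v_def)
    finally show "(if x = y then 1 else 0) = (\<Sum>k\<in>K1 <+> K2. u k x * v k y)" .
  qed (use assms in auto)
  then show ?thesis using assms by (simp add: card_Plus)
qed

lemma card_le_of_diagonal_slice_decomposition:
  fixes fa fb fc :: "'k \<Rightarrow> 's \<Rightarrow> 'a::field"
  assumes "finite S" "finite K1" "finite K2" "finite K3"
    and "\<And>x y z. x \<in> S \<Longrightarrow> y \<in> S \<Longrightarrow> z \<in> S \<Longrightarrow>
      (if x = y \<and> y = z then 1 else 0) =
      (\<Sum>k\<in>K1. fa k x * ga k y z) + (\<Sum>k\<in>K2. fb k y * gb k x z) + (\<Sum>k\<in>K3. fc k z * gc k x y)"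
  shows "card S \<le> card K1 + card K2 + card K3"
  using assms(4,1-3,5)
proof (induction K3 arbitrary: S ga gb fc rule: finite_induct)
  case empty
  then show ?case using card_le_of_two_slice_decomposition[of S K1 K2 fa ga fb gb] by simp
next
  case (insert k0 K3)
  show ?case
  proof (cases "\<forall>s\<in>S. fc k0 s = 0")
    case True
    then have "card S \<le> card K1 + card K2 + card K3" using insert by (intro insert.IH) auto
    then show ?thesis using insert by simp
  next
    case False
    then obtain s0 where s0: "s0 \<in> S" "fc k0 s0 \<noteq> 0" by blast
    define r where "r z = fc k0 z / fc k0 s0" for z
    define ga' where "ga' k y z = ga k y z - r z * ga k y s0" for k y z
    define gb' where "gb' k x z = gb k x z - r z * gb k x s0" for k x z
    define fc' where "fc' k z = fc k z - r z * fc k s0" for k z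
    have "card (S - {s0}) \<le> card K1 + card K2 + card K3"
    proof (rule insert.IH)
      fix x y z assume xyz: "x \<in> S - {s0}" "y \<in> S - {s0}" "z \<in> S - {s0}"
      have "(\<Sum>k\<in>K3. fc' k z * gc k x y) = (\<Sum>k\<in>insert k0 K3. fc' k z * gc k x y)"
        using insert s0 by (simp add: fc'_def r_def)
      then have "(\<Sum>k\<in>K1. fa k x * ga' k y z) + (\<Sum>k\<in>K2. fb k y * gb' k x z) + (\<Sum>k\<in>K3. fc' k z * gc k x y)
        = ((\<Sum>k\<in>K1. fa k x * ga k y z) + (\<Sum>k\<in>K2. fb k y * gb k x z) + (\<Sum>k\<in>insert k0 K3. fc k z * gc k x y))
          - r z * ((\<Sum>k\<in>K1. fa k x * ga k y s0) + (\<Sum>k\<in>K2. fb k y * gb k x s0)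
            + (\<Sum>k\<in>insert k0 K3. fc k s0 * gc k x y))"
        by (simp add: ga'_def gb'_def fc'_def algebra_simps sum_subtractf sum_distrib_left)
      also have "\<dots> = (if x = y \<and> y = z then 1 else 0)"
        using insert.prems(4)[of x y z] insert.prems(4)[of x y s0] xyz s0 by auto
      finally show "(if x = y \<and> y = z then 1 else 0) =
        (\<Sum>k\<in>K1. fa k x * ga' k y z) + (\<Sum>k\<in>K2. fb k y * gb' k x z) + (\<Sum>k\<in>K3. fc' k z * gc k x y)"
        by simp
    qed (use insert in auto)
    then show ?thesis using insert s0 by (simp add: card_Diff_singleton)
  qed
qed

definition low_degree_exponents :: "nat \<Rightarrow> nat \<Rightarrow> (nat \<Rightarrow> nat) set" where
  "low_degree_exponents q n = {k \<in> PiE {..<n} (\<lambda>_. {..<q}). 3 * (\<Sum>i<n. k i) \<le> (q - 1) * n}"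

lemma finite_low_degree_exponents: "finite (low_degree_exponents q n)"
  by (rule finite_subset[of _ "PiE {..<n} (\<lambda>_. {..<q})"]) (auto simp: low_degree_exponents_def finite_PiE)

lemma restrict_in_low_degree_exponents:
  assumes "\<And>i. i < n \<Longrightarrow> k i \<le> m" "3 * (\<Sum>i<n. k i) \<le> m * n"
  shows "restrict k {..<n} \<in> low_degree_exponents (Suc m) n"
  using assms by (simp add: low_degree_exponents_def restrict_PiE_iff less_Suc_eq_le)

lemma card_low_degree_exponents_pos: "0 < q \<Longrightarrow> 0 < card (low_degree_exponents q n)"
  using restrict_in_low_degree_exponents[of n "\<lambda>_. 0" "q - 1"]
  by (auto simp: card_gt_0_iff finite_low_degree_exponents)

lemma card_low_degree_exponents_weighted_le:
  fixes y :: real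
  assumes "0 < y" "y \<le> 1"
  shows "card (low_degree_exponents q n) * y ^ ((q - 1) * n) \<le> (\<Sum>k<q. y ^ (3 * k)) ^ n"
proof -
  have "card (low_degree_exponents q n) * y ^ ((q - 1) * n)
      = (\<Sum>k\<in>low_degree_exponents q n. y ^ ((q - 1) * n))"
    by simp
  also have "\<dots> \<le> (\<Sum>k\<in>low_degree_exponents q n. y ^ (3 * (\<Sum>i<n. k i)))"
    using assms by (intro sum_mono power_decreasing) (auto simp: low_degree_exponents_def)
  also have "\<dots> \<le> (\<Sum>k\<in>PiE {..<n} (\<lambda>_. {..<q}). y ^ (3 * (\<Sum>i<n. k i)))"
    using assms by (intro sum_mono2) (auto simp: low_degree_exponents_def finite_PiE)
  also have "\<dots> = (\<Sum>k\<in>PiE {..<n} (\<lambda>_. {..<q}). \<Prod>i<n. y ^ (3 * k i))"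
    by (simp add: sum_distrib_left power_sum)
  also have "\<dots> = (\<Sum>k<q. y ^ (3 * k)) ^ n"
    by (subst prod_sum_PiE[symmetric]) auto
  finally show ?thesis .
qed

lemma exists_geometric_sum_below_power:
  assumes "2 \<le> q"
  shows "\<exists>y::real. 0 < y \<and> y < 1 \<and> (\<Sum>k<q. y ^ (3 * k)) < q * y ^ (q - 1)"
proof -
  \<comment> \<open>\<open>F\<close> vanishes at 1 with derivative \<open>- q * (q - 1) / 2 < 0\<close> there.\<close>
  define F where "F y = q * y ^ (q - 1) - (\<Sum>k<q. y ^ (3 * k))" for y :: real
  have sum3: "(\<Sum>k<q. real (3 * k)) = 3 * real q * (real q - 1) / 2"
    by (induction q) (auto simp: field_simps)
  have "q * real (q - 1) - (\<Sum>k<q. real (3 * k)) = - (real q * (real q - 1)) / 2"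
    unfolding sum3 using assms by (simp add: field_simps)
  then have "q * real (q - 1) - (\<Sum>k<q. real (3 * k)) < 0"
    using assms by simp
  moreover have "DERIV F 1 :> q * real (q - 1) - (\<Sum>k<q. real (3 * k))"
    unfolding F_def by (auto intro!: derivative_eq_intros)
  ultimately obtain d where d: "d > 0" "\<And>h. h > 0 \<Longrightarrow> h < d \<Longrightarrow> F 1 < F (1 - h)"
    using DERIV_neg_dec_left by blast
  define h where "h = min (d / 2) (1 / 2)"
  have "0 < h" "h < d" "h < 1" using d unfolding h_def by auto
  moreover have "F 1 = 0" unfolding F_def by simp
  ultimately show ?thesis using d(2) unfolding F_def by (intro exI[of _ "1 - h"]) force
qed

lemma card_low_degree_exponents_exponential_bound:
  assumes "2 \<le> q"
  obtains G :: real where "0 < G" "G < q" "\<And>n. card (low_degree_exponents q n) \<le> G ^ n"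
proof -
  obtain y :: real where y: "0 < y" "y < 1" "(\<Sum>k<q. y ^ (3 * k)) < q * y ^ (q - 1)"
    using exists_geometric_sum_below_power[OF assms] by blast
  define G where "G = (\<Sum>k<q. y ^ (3 * k)) / y ^ (q - 1)"
  have "0 < (\<Sum>k<q. y ^ (3 * k))"
    using y assms by (intro sum_pos) (auto simp: lessThan_empty_iff)
  then have "0 < G" using y by (simp add: G_def)
  moreover have "G < q" using y by (simp add: G_def divide_less_eq)
  moreover have "card (low_degree_exponents q n) \<le> G ^ n" for n
  proof -
    have "card (low_degree_exponents q n) * (y ^ (q - 1)) ^ n \<le> (\<Sum>k<q. y ^ (3 * k)) ^ n"
      using card_low_degree_exponents_weighted_le[of y q n] y by (simp add: power_mult)
    then show ?thesis
      using y by (simp add: G_def power_divide le_divide_eq)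
  qed
  ultimately show thesis using that by blast
qed

section \<open>Slicing a product of polynomials\<close>

lemma sum_mult_group_by:
  fixes u :: "'k \<Rightarrow> 'a::comm_semiring_0"
  assumes "finite F"
  shows "(\<Sum>f\<in>F. u (\<kappa> f) * w f) = (\<Sum>k\<in>\<kappa> ` F. u k * (\<Sum>f\<in>{f\<in>F. \<kappa> f = k}. w f))"
  by (subst sum.image_gen[OF assms]) (auto simp: sum_distrib_left intro!: sum.cong)

lemma sum_filter_split:
  assumes "finite P"
  shows "sum h P = sum h {f\<in>P. A f} + sum h {f\<in>P. \<not> A f}"
proof -
  have "sum h {f\<in>P. A f} + sum h {f\<in>P. \<not> A f} = sum h ({f\<in>P. A f} \<union> {f\<in>P. \<not> A f})"
    by (rule sum.union_disjoint[symmetric]) (use assms in auto)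
  also have "{f\<in>P. A f} \<union> {f\<in>P. \<not> A f} = P" by auto
  finally show ?thesis by simp
qed

lemma sum_filter_split_three:
  assumes "finite P"
  shows "sum h P = sum h {f\<in>P. A f} + sum h {f\<in>P. \<not> A f \<and> B f} + sum h {f\<in>P. \<not> A f \<and> \<not> B f}"
proof -
  have "sum h P = sum h {f\<in>P. A f} + sum h {f\<in>P. \<not> A f}" by (rule sum_filter_split[OF assms])
  also have "sum h {f\<in>P. \<not> A f} = sum h {f\<in>{f\<in>P. \<not> A f}. B f} + sum h {f\<in>{f\<in>P. \<not> A f}. \<not> B f}"
    by (rule sum_filter_split) (use assms in simp)
  also have "{f\<in>{f\<in>P. \<not> A f}. B f} = {f\<in>P. \<not> A f \<and> B f}" by auto
  also have "{f\<in>{f\<in>P. \<not> A f}. \<not> B f} = {f\<in>P. \<not> A f \<and> \<not> B f}" by auto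
  finally show ?thesis by (simp add: add.assoc)
qed

definition monomial_eval :: "(nat \<Rightarrow> 'a::comm_monoid_mult) \<Rightarrow> nat \<Rightarrow> (nat \<Rightarrow> nat) \<Rightarrow> 'a" where
  "monomial_eval x n k = (\<Prod>i<n. x i ^ k i)"

lemma monomial_eval_restrict: "monomial_eval x n (restrict k {..<n}) = (\<Prod>i<n. x i ^ k i)"
  by (simp add: monomial_eval_def)

lemma sum_low_degree_slice:
  fixes \<alpha> :: "'i \<Rightarrow> nat" and w :: "'p \<Rightarrow> (nat \<Rightarrow> 'i) \<Rightarrow> 'a::comm_semiring_1"
  assumes "finite F" "F \<subseteq> PiE {..<n} (\<lambda>_. E)" "\<And>e. e \<in> E \<Longrightarrow> \<alpha> e \<le> m"
    and "\<And>f. f \<in> F \<Longrightarrow> 3 * (\<Sum>i<n. \<alpha> (f i)) \<le> m * n"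
  obtains K g where "K \<subseteq> low_degree_exponents (Suc m) n"
    "\<And>x p. (\<Sum>f\<in>F. (\<Prod>i<n. x i ^ \<alpha> (f i)) * w p f) = (\<Sum>k\<in>K. monomial_eval x n k * g k p)"
proof
  define \<kappa> where "\<kappa> f = restrict (\<lambda>i. \<alpha> (f i)) {..<n}" for f :: "nat \<Rightarrow> 'i"
  show "\<kappa> ` F \<subseteq> low_degree_exponents (Suc m) n"
    using assms(2-4) unfolding \<kappa>_def by (auto intro!: restrict_in_low_degree_exponents)
  fix x :: "nat \<Rightarrow> 'a" and p
  show "(\<Sum>f\<in>F. (\<Prod>i<n. x i ^ \<alpha> (f i)) * w p f)
      = (\<Sum>k\<in>\<kappa> ` F. monomial_eval x n k * (\<Sum>f\<in>{f\<in>F. \<kappa> f = k}. w p f))"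
    using sum_mult_group_by[OF assms(1), of "monomial_eval x n" \<kappa> "w p"]
    by (simp add: \<kappa>_def monomial_eval_restrict)
qed

lemma prod_sum_eq_sum_monomials:
  fixes c :: "'i \<Rightarrow> 'a::comm_semiring_1" and n :: nat
  assumes "finite E"
  shows "(\<Prod>i<n. \<Sum>e\<in>E. c e * x i ^ \<alpha> e * y i ^ \<beta> e * z i ^ \<gamma> e) =
    (\<Sum>f\<in>PiE {..<n} (\<lambda>_. E). (\<Prod>i<n. c (f i)) * (\<Prod>i<n. x i ^ \<alpha> (f i))
      * (\<Prod>i<n. y i ^ \<beta> (f i)) * (\<Prod>i<n. z i ^ \<gamma> (f i)))"
  using assms by (simp add: prod_sum_PiE prod.distrib)

lemma sum_partial_degrees_le:
  fixes n :: nat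
  assumes "f \<in> PiE {..<n} (\<lambda>_. E)" "\<And>e. e \<in> E \<Longrightarrow> \<alpha> e + \<beta> e + \<gamma> e \<le> m"
  shows "(\<Sum>i<n. \<alpha> (f i)) + (\<Sum>i<n. \<beta> (f i)) + (\<Sum>i<n. \<gamma> (f i)) \<le> m * n"
proof -
  have "(\<Sum>i<n. \<alpha> (f i)) + (\<Sum>i<n. \<beta> (f i)) + (\<Sum>i<n. \<gamma> (f i)) = (\<Sum>i<n. \<alpha> (f i) + \<beta> (f i) + \<gamma> (f i))"
    by (simp add: sum.distrib)
  also have "\<dots> \<le> (\<Sum>i<n. m)" using assms by (intro sum_mono) (auto simp: PiE_def Pi_def)
  finally show ?thesis by (simp add: mult.commute)
qed

lemma product_slice_decomposition:
  fixes c :: "'i \<Rightarrow> 'a::comm_semiring_1"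
  assumes "finite E" and deg: "\<And>e. e \<in> E \<Longrightarrow> \<alpha> e + \<beta> e + \<gamma> e \<le> m"
  obtains K1 K2 K3 and g1 g2 g3 :: "(nat \<Rightarrow> nat) \<Rightarrow> (nat \<Rightarrow> 'a) \<Rightarrow> (nat \<Rightarrow> 'a) \<Rightarrow> 'a"
  where "K1 \<subseteq> low_degree_exponents (Suc m) n" "K2 \<subseteq> low_degree_exponents (Suc m) n"
    "K3 \<subseteq> low_degree_exponents (Suc m) n"
    "\<And>x y z. (\<Prod>i<n. \<Sum>e\<in>E. c e * x i ^ \<alpha> e * y i ^ \<beta> e * z i ^ \<gamma> e) =
      (\<Sum>k\<in>K1. monomial_eval x n k * g1 k y z) + (\<Sum>k\<in>K2. monomial_eval y n k * g2 k x z)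
      + (\<Sum>k\<in>K3. monomial_eval z n k * g3 k x y)"
proof -
  define P where "P = PiE {..<n} (\<lambda>_. E)"
  define mon where "mon x \<phi> f = (\<Prod>i<n. x i ^ \<phi> (f i))"
    for x :: "nat \<Rightarrow> 'a" and \<phi> :: "'i \<Rightarrow> nat" and f :: "nat \<Rightarrow> 'i"
  define C where "C f = (\<Prod>i<n. c (f i))" for f
  \<comment> \<open>Every term has total degree at most \<open>m * n\<close>, so one of its three partial degrees is small.\<close>
  define F1 where "F1 = {f\<in>P. 3 * (\<Sum>i<n. \<alpha> (f i)) \<le> m * n}"
  define F2 where "F2 = {f\<in>P. \<not> 3 * (\<Sum>i<n. \<alpha> (f i)) \<le> m * n \<and> 3 * (\<Sum>i<n. \<beta> (f i)) \<le> m * n}"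
  define F3 where "F3 = {f\<in>P. \<not> 3 * (\<Sum>i<n. \<alpha> (f i)) \<le> m * n \<and> \<not> 3 * (\<Sum>i<n. \<beta> (f i)) \<le> m * n}"
  have finP: "finite P" using assms(1) by (simp add: P_def finite_PiE)
  have fin: "finite F1" "finite F2" "finite F3" using finP by (simp_all add: F1_def F2_def F3_def)
  have le_m: "\<alpha> e \<le> m" "\<beta> e \<le> m" "\<gamma> e \<le> m" if "e \<in> E" for e
    using deg[OF that] by auto
  have high: "3 * (\<Sum>i<n. \<gamma> (f i)) \<le> m * n" if "f \<in> F3" for f
    using that sum_partial_degrees_le[of f n E \<alpha> \<beta> \<gamma> m] deg by (auto simp: F3_def P_def)
  define w1 where "w1 = (\<lambda>(y, z) f. C f * mon y \<beta> f * mon z \<gamma> f)"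
  define w2 where "w2 = (\<lambda>(x, z) f. C f * mon x \<alpha> f * mon z \<gamma> f)"
  define w3 where "w3 = (\<lambda>(x, y) f. C f * mon x \<alpha> f * mon y \<beta> f)"
  obtain K1 g1 where K1: "K1 \<subseteq> low_degree_exponents (Suc m) n"
    and g1: "\<And>x p. (\<Sum>f\<in>F1. (\<Prod>i<n. x i ^ \<alpha> (f i)) * w1 p f)
      = (\<Sum>k\<in>K1. monomial_eval x n k * g1 k p)"
    by (rule sum_low_degree_slice[of F1 n E \<alpha> m w1]) (use fin le_m in \<open>auto simp: F1_def P_def\<close>)
  obtain K2 g2 where K2: "K2 \<subseteq> low_degree_exponents (Suc m) n"
    and g2: "\<And>x p. (\<Sum>f\<in>F2. (\<Prod>i<n. x i ^ \<beta> (f i)) * w2 p f)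
      = (\<Sum>k\<in>K2. monomial_eval x n k * g2 k p)"
    by (rule sum_low_degree_slice[of F2 n E \<beta> m w2]) (use fin le_m in \<open>auto simp: F2_def P_def\<close>)
  obtain K3 g3 where K3: "K3 \<subseteq> low_degree_exponents (Suc m) n"
    and g3: "\<And>x p. (\<Sum>f\<in>F3. (\<Prod>i<n. x i ^ \<gamma> (f i)) * w3 p f)
      = (\<Sum>k\<in>K3. monomial_eval x n k * g3 k p)"
    by (rule sum_low_degree_slice[of F3 n E \<gamma> m w3]) (use fin le_m high in \<open>auto simp: F3_def P_def\<close>)
  have "(\<Prod>i<n. \<Sum>e\<in>E. c e * x i ^ \<alpha> e * y i ^ \<beta> e * z i ^ \<gamma> e) =
      (\<Sum>k\<in>K1. monomial_eval x n k * g1 k (y, z)) + (\<Sum>k\<in>K2. monomial_eval y n k * g2 k (x, z))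
      + (\<Sum>k\<in>K3. monomial_eval z n k * g3 k (x, y))" for x y z
  proof -
    have "(\<Prod>i<n. \<Sum>e\<in>E. c e * x i ^ \<alpha> e * y i ^ \<beta> e * z i ^ \<gamma> e)
        = (\<Sum>f\<in>P. C f * mon x \<alpha> f * mon y \<beta> f * mon z \<gamma> f)"
      using prod_sum_eq_sum_monomials[OF assms(1)] by (simp add: P_def C_def mon_def)
    also have "\<dots> = (\<Sum>f\<in>F1. mon x \<alpha> f * w1 (y, z) f) + (\<Sum>f\<in>F2. mon y \<beta> f * w2 (x, z) f)
        + (\<Sum>f\<in>F3. mon z \<gamma> f * w3 (x, y) f)"
      unfolding F1_def F2_def F3_def w1_def w2_def w3_def
      by (subst sum_filter_split_three[OF finP]) (simp add: mult_ac)
    finally show ?thesis by (simp only: g1 g2 g3 mon_def)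
  qed
  with K1 K2 K3 show thesis by (intro that[of K1 K2 K3 "\<lambda>k y z. g1 k (y, z)" "\<lambda>k x z. g2 k (x, z)"
        "\<lambda>k x y. g3 k (x, y)"]) auto
qed

section \<open>Tricolored sum-free families\<close>

lemma finite_fvecs: "finite (fvecs n :: (nat \<Rightarrow> 'a::{zero,finite}) set)"
proof -
  have "fvecs n = {x :: nat \<Rightarrow> 'a. \<forall>i. (i \<in> {..<n} \<longrightarrow> x i \<in> UNIV) \<and> (i \<notin> {..<n} \<longrightarrow> x i = 0)}"
    by (auto simp: fvecs_def)
  then show ?thesis using finite_set_of_finite_funs[of "{..<n}" "UNIV :: 'a set" 0] by simp
qed

lemma fvecs_all_zero_iff:
  assumes "x \<in> fvecs n"
  shows "(\<forall>i<n. x i = 0) \<longleftrightarrow> (\<forall>i. x i = 0)"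
  using assms leI by (auto simp: fvecs_def)

lemma fvecs_scale: "(v :: nat \<Rightarrow> 'a::semiring_0) \<in> fvecs n \<Longrightarrow> (\<lambda>t. c * v t) \<in> fvecs n"
  by (simp add: fvecs_def)

lemma fvecs_add: "(v :: nat \<Rightarrow> 'a::semiring_0) \<in> fvecs n \<Longrightarrow> w \<in> fvecs n \<Longrightarrow> (\<lambda>t. v t + w t) \<in> fvecs n"
  by (simp add: fvecs_def)

lemma fvecs_lincomb: "(\<And>l. l \<in> L \<Longrightarrow> (v l :: nat \<Rightarrow> 'a::semiring_0) \<in> fvecs n) \<Longrightarrow> (\<lambda>t. \<Sum>l\<in>L. c l * v l t) \<in> fvecs n"
  by (simp add: fvecs_def)

lemma prod_zero_indicator:
  fixes n :: nat
  shows "(\<Prod>i<n. if w i = 0 then 1 else (0::'a::comm_semiring_1)) = (if \<forall>i<n. w i = 0 then 1 else 0)"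
  by (induction n) (auto simp: less_Suc_eq)

definition tricolored_sum_free ::
    "nat \<Rightarrow> 's set \<Rightarrow> ('s \<Rightarrow> nat \<Rightarrow> 'a::ab_group_add) \<Rightarrow> ('s \<Rightarrow> nat \<Rightarrow> 'a) \<Rightarrow> ('s \<Rightarrow> nat \<Rightarrow> 'a) \<Rightarrow> bool"
  where "tricolored_sum_free n S pa pb pc \<longleftrightarrow>
    (\<forall>s\<in>S. pa s \<in> fvecs n \<and> pb s \<in> fvecs n \<and> pc s \<in> fvecs n \<and> (\<forall>i. pa s i + pb s i + pc s i = 0)) \<and>
    (\<forall>s1\<in>S. \<forall>s2\<in>S. \<forall>s3\<in>S. (\<forall>i. pa s1 i + pb s2 i + pc s3 i = 0) \<longrightarrow> s1 = s2 \<and> s2 = s3)"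

lemma tricolored_sum_freeI:
  assumes "\<And>s. s \<in> S \<Longrightarrow> pa s \<in> fvecs n \<and> pb s \<in> fvecs n \<and> pc s \<in> fvecs n"
    and "\<And>s i. s \<in> S \<Longrightarrow> pa s i + pb s i + pc s i = 0"
    and "\<And>s1 s2 s3. s1 \<in> S \<Longrightarrow> s2 \<in> S \<Longrightarrow> s3 \<in> S \<Longrightarrow>
       (\<forall>i. pa s1 i + pb s2 i + pc s3 i = 0) \<Longrightarrow> s1 = s2 \<and> s2 = s3"
  shows "tricolored_sum_free n S pa pb pc"
  using assms by (simp add: tricolored_sum_free_def)

lemma tricolored_sum_free_card_le:
  fixes pa pb pc :: "'s \<Rightarrow> nat \<Rightarrow> 'a::{field,finite}"
  assumes "finite S" and "tricolored_sum_free n S pa pb pc"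
  shows "card S \<le> 3 * card (low_degree_exponents CARD('a) n)"
proof -
  note in_fvecs = assms(2)[unfolded tricolored_sum_free_def, THEN conjunct1, rule_format]
  note off_diagonal = assms(2)[unfolded tricolored_sum_free_def, THEN conjunct2, rule_format]
  obtain E :: "(nat \<times> nat) option set" and \<alpha> \<beta> \<gamma> and c :: "(nat \<times> nat) option \<Rightarrow> 'a"
    where E: "finite E"
    "\<And>e. e \<in> E \<Longrightarrow> \<alpha> e + \<beta> e + \<gamma> e \<le> CARD('a) - 1"
    and indicator: "\<And>x y z. (if x + y + z = 0 then 1 else 0) = (\<Sum>e\<in>E. c e * x ^ \<alpha> e * y ^ \<beta> e * z ^ \<gamma> e)"
    using zero_indicator_sum3_expansion[where 'a = 'a] by blast
  have q: "Suc (CARD('a) - 1) = CARD('a)" using two_le_card_field[where 'a = 'a] by simp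
  obtain K1 K2 K3 g1 g2 g3 where K: "K1 \<subseteq> low_degree_exponents CARD('a) n"
    "K2 \<subseteq> low_degree_exponents CARD('a) n" "K3 \<subseteq> low_degree_exponents CARD('a) n"
    and decomposition: "\<And>x y z. (\<Prod>i<n. \<Sum>e\<in>E. c e * x i ^ \<alpha> e * y i ^ \<beta> e * z i ^ \<gamma> e) =
      (\<Sum>k\<in>K1. monomial_eval x n k * g1 k y z) + (\<Sum>k\<in>K2. monomial_eval y n k * g2 k x z)
      + (\<Sum>k\<in>K3. monomial_eval z n k * g3 k x y)"
    by (rule product_slice_decomposition[of E \<alpha> \<beta> \<gamma> "CARD('a) - 1" n c]) (use E q in auto)
  have "card S \<le> card K1 + card K2 + card K3"
  proof (rule card_le_of_diagonal_slice_decomposition)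
    show "finite K1" "finite K2" "finite K3"
      using K finite_subset finite_low_degree_exponents by blast+
    fix s1 s2 s3 assume s: "s1 \<in> S" "s2 \<in> S" "s3 \<in> S"
    have "(\<lambda>i. pa s1 i + pb s2 i + pc s3 i) \<in> fvecs n"
      using in_fvecs[OF s(1)] in_fvecs[OF s(2)] in_fvecs[OF s(3)] by (simp add: fvecs_def)
    then have "(\<forall>i<n. pa s1 i + pb s2 i + pc s3 i = 0) \<longleftrightarrow> (\<forall>i. pa s1 i + pb s2 i + pc s3 i = 0)"
      by (rule fvecs_all_zero_iff)
    also have "\<dots> \<longleftrightarrow> s1 = s2 \<and> s2 = s3"
      using off_diagonal[OF s] in_fvecs[OF s(1)] by fastforce
    finally show "(if s1 = s2 \<and> s2 = s3 then 1 else 0) =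
      (\<Sum>k\<in>K1. monomial_eval (pa s1) n k * g1 k (pb s2) (pc s3))
      + (\<Sum>k\<in>K2. monomial_eval (pb s2) n k * g2 k (pa s1) (pc s3))
      + (\<Sum>k\<in>K3. monomial_eval (pc s3) n k * g3 k (pa s1) (pb s2))"
      by (simp add: decomposition[symmetric] indicator[symmetric] prod_zero_indicator)
  qed (rule assms(1))
  also have "\<dots> \<le> 3 * card (low_degree_exponents CARD('a) n)"
    using card_mono[OF finite_low_degree_exponents K(1)] card_mono[OF finite_low_degree_exponents K(2)]
      card_mono[OF finite_low_degree_exponents K(3)] by linarith
  finally show ?thesis .
qed

section \<open>Packings by disjoint blocks\<close>

definition block_packing :: "'i set \<Rightarrow> 'b set \<Rightarrow> (('i \<Rightarrow> 'b) \<Rightarrow> bool) \<Rightarrow> ('i \<Rightarrow> 'b) set \<Rightarrow> bool"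
  where "block_packing I A P S \<longleftrightarrow>
    finite S \<and> (\<forall>u\<in>S. P u \<and> inj_on u I \<and> u ` I \<subseteq> A) \<and> disjoint_family_on (\<lambda>u. u ` I) S"

lemma block_packing_mem:
  "block_packing I A P S \<Longrightarrow> u \<in> S \<Longrightarrow> l \<in> I \<Longrightarrow> u l \<in> A"
  "block_packing I A P S \<Longrightarrow> u \<in> S \<Longrightarrow> P u"
  by (auto simp: block_packing_def)

lemma block_packing_apply_eq_iff:
  assumes "block_packing I A P S" "u \<in> S" "v \<in> S" "l \<in> I" "l' \<in> I"
  shows "u l = v l' \<longleftrightarrow> u = v \<and> l = l'"
proof
  assume eq: "u l = v l'"
  have "u ` I \<inter> v ` I \<noteq> {}" using eq assms(4,5) by blast
  then have "u = v"
    using assms(1-3) disjoint_family_onD[of "\<lambda>u. u ` I" S u v] by (auto simp: block_packing_def)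
  moreover have "inj_on u I" using assms(1,2) by (simp add: block_packing_def)
  ultimately show "u = v \<and> l = l'" using eq assms(4,5) by (simp add: inj_on_eq_iff)
qed simp

lemma exists_block_packing:
  assumes "finite A" "finite I" "I \<noteq> {}"
    and "\<And>B. B \<subseteq> A \<Longrightarrow> L < card B \<Longrightarrow> \<exists>u. P u \<and> inj_on u I \<and> u ` I \<subseteq> B"
  shows "\<exists>S. block_packing I A P S \<and> card A \<le> L + card I * card S"
  using assms
proof (induction "card A" arbitrary: A rule: less_induct)
  case less
  show ?case
  proof (cases "card A \<le> L")
    case True
    then show ?thesis by (intro exI[of _ "{}"]) (simp add: block_packing_def disjoint_family_on_def)
  next
    case False
    then obtain u where u: "P u" "inj_on u I" "u ` I \<subseteq> A"
      using less.prems(4)[of A] by auto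
    define A' where "A' = A - u ` I"
    have card_A: "card A = card A' + card I"
      using u less.prems(1) card_mono[OF less.prems(1) u(3)]
      by (simp add: A'_def card_Diff_subset finite_subset card_image)
    moreover have "0 < card I" using less.prems(2,3) by (simp add: card_gt_0_iff)
    ultimately have smaller: "card A' < card A" by simp
    have "finite A'" using less.prems(1) by (simp add: A'_def)
    moreover have "\<exists>u. P u \<and> inj_on u I \<and> u ` I \<subseteq> B" if "B \<subseteq> A'" "L < card B" for B
      using less.prems(4) that by (auto simp: A'_def)
    ultimately obtain S where S: "block_packing I A' P S" "card A' \<le> L + card I * card S"
      using less.hyps[OF smaller _ less.prems(2,3)] by blast
    have "u \<notin> S"
      using S(1) less.prems(3) by (auto simp: block_packing_def A'_def)
    then have "block_packing I A P (insert u S)"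
      using S(1) u by (auto simp: block_packing_def disjoint_family_on_insert A'_def)
    with \<open>u \<notin> S\<close> show ?thesis
      using S card_A by (intro exI[of _ "insert u S"]) (simp add: block_packing_def)
  qed
qed

lemma card_le_by_block_packing:
  assumes "finite A" "finite I" "I \<noteq> {}"
    and "\<And>B. B \<subseteq> A \<Longrightarrow> L < card B \<Longrightarrow> \<exists>u. P u \<and> inj_on u I \<and> u ` I \<subseteq> B"
    and "\<And>S. block_packing I A P S \<Longrightarrow> card S \<le> M"
  shows "card A \<le> L + card I * M"
proof -
  obtain S where "block_packing I A P S" "card A \<le> L + card I * card S"
    using exists_block_packing[OF assms(1-4)] by blast
  then show ?thesis using assms(5) by (meson add_left_mono le_trans mult_le_mono2)
qed

definition distinct_solution ::
    "(nat \<Rightarrow> 'a::field) \<Rightarrow> nat set \<Rightarrow> (nat \<Rightarrow> 'a) set \<Rightarrow> (nat \<Rightarrow> nat \<Rightarrow> 'a) \<Rightarrow> bool"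
  where "distinct_solution a J A x \<longleftrightarrow>
    (\<forall>j\<in>J. x j \<in> A) \<and> inj_on x J \<and> (\<forall>i. (\<Sum>j\<in>J. a j * x j i) = 0)"

lemma distinct_solution_from_blocks:
  assumes S: "block_packing I A P S"
    and \<sigma>\<tau>: "\<And>l. l \<in> J \<Longrightarrow> \<sigma> l \<in> S \<and> \<tau> l \<in> I" "inj_on (\<lambda>l. (\<sigma> l, \<tau> l)) J"
    and "\<forall>i. (\<Sum>l\<in>J. a l * \<sigma> l (\<tau> l) i) = 0"
  shows "distinct_solution a J A (\<lambda>l. \<sigma> l (\<tau> l))"
  unfolding distinct_solution_def
proof (intro conjI)
  show "\<forall>l\<in>J. \<sigma> l (\<tau> l) \<in> A" using S \<sigma>\<tau>(1) by (force simp: block_packing_def)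
  show "inj_on (\<lambda>l. \<sigma> l (\<tau> l)) J"
    using \<sigma>\<tau> block_packing_apply_eq_iff[OF S] by (simp add: inj_on_def)
qed fact

definition avoidance_bound :: "(nat \<Rightarrow> 'a::{field,finite}) \<Rightarrow> nat set \<Rightarrow> nat \<Rightarrow> bool" where
  "avoidance_bound a J K \<longleftrightarrow> (\<forall>n A. A \<subseteq> fvecs n \<longrightarrow> (\<nexists>x. distinct_solution a J A x) \<longrightarrow>
    card A \<le> K * card (low_degree_exponents CARD('a) n))"

lemma avoidance_boundD:
  fixes a :: "nat \<Rightarrow> 'a::{field,finite}"
  assumes "avoidance_bound a J K" "B \<subseteq> fvecs n" "K * card (low_degree_exponents CARD('a) n) < card B"
  shows "\<exists>x. distinct_solution a J B x"
  using assms unfolding avoidance_bound_def by (meson not_le)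

lemma eq_if_mult_add_eq_zero:
  fixes u v w :: "nat \<Rightarrow> 'a::field"
  assumes "b \<noteq> 0" "\<forall>i. b * u i + w i = 0" "\<forall>i. b * v i + w i = 0"
  shows "u = v"
proof
  fix i
  have "b * u i = b * v i" using assms(2,3) add_right_cancel by metis
  then show "u i = v i" using assms(1) by simp
qed

lemma sum_remove_two:
  assumes "finite J" "i \<in> J" "j \<in> J" "i \<noteq> j"
  shows "(\<Sum>l\<in>J. f l) = f i + (f j + (\<Sum>l\<in>J - {i, j}. f l))"
proof -
  have "J = insert i (insert j (J - {i, j}))" using assms by auto
  also have "(\<Sum>l\<in>\<dots>. f l) = f i + (f j + (\<Sum>l\<in>J - {i, j}. f l))"
    using assms by simp
  finally show ?thesis .
qed

lemma sum_merge_coefficients: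
  fixes a v :: "nat \<Rightarrow> 'a::comm_semiring_1"
  assumes "finite J" "i \<in> J" "j \<in> J" "i \<noteq> j"
  shows "(\<Sum>l\<in>J - {j}. (a(i := a i + a j)) l * v l) = (a i + a j) * v i + (\<Sum>l\<in>J - {i, j}. a l * v l)"
proof -
  have "(\<Sum>l\<in>J - {j}. (a(i := a i + a j)) l * v l)
      = (a i + a j) * v i + (\<Sum>l\<in>J - {j} - {i}. (a(i := a i + a j)) l * v l)"
    using assms by (subst sum.remove[of _ i]) auto
  also have "J - {j} - {i} = J - {i, j}" by auto
  also have "(\<Sum>l\<in>J - {i, j}. (a(i := a i + a j)) l * v l) = (\<Sum>l\<in>J - {i, j}. a l * v l)"
    by (rule sum.cong) auto
  finally show ?thesis .
qed

lemma avoidance_bound_three: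
  fixes a :: "nat \<Rightarrow> 'a::{field,finite}"
  assumes J: "J = {j1, j2, j3}" "j1 \<noteq> j2" "j2 \<noteq> j3" "j1 \<noteq> j3"
    and nz: "a j1 \<noteq> 0" "a j2 \<noteq> 0" "a j3 \<noteq> 0" and sum: "a j1 + a j2 + a j3 = 0"
  shows "avoidance_bound a J 3"
  unfolding avoidance_bound_def
proof (intro allI impI)
  fix n and A :: "(nat \<Rightarrow> 'a) set"
  assume A: "A \<subseteq> fvecs n" and no_solution: "\<nexists>x. distinct_solution a J A x"
  have a1: "a j1 = - a j2 - a j3" using sum by (simp add: eq_neg_iff_add_eq_0 algebra_simps)
  have "a j2 + a j3 \<noteq> 0" using sum nz(1) by (metis add.assoc add_0_right)
  show "card A \<le> 3 * card (low_degree_exponents CARD('a) n)"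
  proof (rule tricolored_sum_free_card_le)
    show "finite A" using A finite_fvecs finite_subset by blast
    show "tricolored_sum_free n A (\<lambda>s t. a j1 * s t) (\<lambda>s t. a j2 * s t) (\<lambda>s t. a j3 * s t)"
    proof (rule tricolored_sum_freeI)
      fix s t assume "s \<in> A"
      then show "(\<lambda>t. a j1 * s t) \<in> fvecs n \<and> (\<lambda>t. a j2 * s t) \<in> fvecs n \<and> (\<lambda>t. a j3 * s t) \<in> fvecs n"
        using A by (auto intro: fvecs_scale)
      show "a j1 * s t + a j2 * s t + a j3 * s t = 0"
        using sum by (metis distrib_right mult_zero_left)
    next
      fix s1 s2 s3 assume s: "s1 \<in> A" "s2 \<in> A" "s3 \<in> A"
        and eq: "\<forall>t. a j1 * s1 t + a j2 * s2 t + a j3 * s3 t = 0"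
      have "\<forall>t. a j2 * (s2 t - s1 t) + a j3 * (s3 t - s1 t) = 0"
        using eq by (simp add: a1 algebra_simps)
      then have collapse: "s1 = s2 \<or> s1 = s3 \<or> s2 = s3 \<longrightarrow> s1 = s2 \<and> s2 = s3"
        using nz \<open>a j2 + a j3 \<noteq> 0\<close> by (auto simp: fun_eq_iff simp flip: distrib_right)
      show "s1 = s2 \<and> s2 = s3"
      proof (rule ccontr)
        assume "\<not> (s1 = s2 \<and> s2 = s3)"
        then have "s1 \<noteq> s2" "s1 \<noteq> s3" "s2 \<noteq> s3" using collapse by blast+
        then have "distinct_solution a J A (\<lambda>l. if l = j1 then s1 else if l = j2 then s2 else s3)"
          using J s eq by (auto simp: distinct_solution_def add.assoc)
        with no_solution show False by blast
      qed
    qed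
  qed
qed

lemma merged_pair_packing_tricolored:
  fixes a :: "nat \<Rightarrow> 'a::field"
  assumes J: "finite J" "i \<in> J" "j \<in> J" "i \<noteq> j" and nz: "a i + a j \<noteq> 0"
    and A: "A \<subseteq> fvecs n" and no_solution: "\<nexists>x. distinct_solution a J A x"
    and S: "block_packing (J - {j}) A (\<lambda>u. \<forall>t. (a i + a j) * u i t + (\<Sum>l\<in>J - {i, j}. a l * u l t) = 0) S"
  shows "tricolored_sum_free n S (\<lambda>u t. a i * u i t) (\<lambda>u t. a j * u i t)
    (\<lambda>u t. \<Sum>l\<in>J - {i, j}. a l * u l t)"
proof (rule tricolored_sum_freeI)
  define R where "R = J - {i, j}"
  have i: "i \<in> J - {j}" and R: "R \<subseteq> J - {j}" using J by (auto simp: R_def)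
  note mem = block_packing_mem(1)[OF S] and P = block_packing_mem(2)[OF S]
  fix u t assume u: "u \<in> S"
  show "(\<lambda>t. a i * u i t) \<in> fvecs n \<and> (\<lambda>t. a j * u i t) \<in> fvecs n \<and> (\<lambda>t. \<Sum>l\<in>R. a l * u l t) \<in> fvecs n"
    using mem[OF u] i R A by (auto intro!: fvecs_scale fvecs_lincomb)
  show "a i * u i t + a j * u i t + (\<Sum>l\<in>R. a l * u l t) = 0"
    using P[OF u] by (simp add: R_def distrib_right)
next
  fix s1 s2 s3 assume s: "s1 \<in> S" "s2 \<in> S" "s3 \<in> S"
    and eq: "\<forall>t. a i * s1 i t + a j * s2 i t + (\<Sum>l\<in>J - {i, j}. a l * s3 l t) = 0"
  show "s1 = s2 \<and> s2 = s3"
  proof (cases "s1 = s2")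
    case True
    have "s1 i = s3 i"
      using eq True block_packing_mem(2)[OF S s(3)]
      by (intro eq_if_mult_add_eq_zero[OF nz, where w = "\<lambda>t. \<Sum>l\<in>J - {i, j}. a l * s3 l t"]) (auto simp: distrib_right)
    then show ?thesis using True block_packing_apply_eq_iff[OF S s(1,3)] J by auto
  next
    case False
    \<comment> \<open>Splitting the merged vector at \<open>i\<close> back into \<open>s1 i\<close> and \<open>s2 i\<close> gives a solution.\<close>
    define \<sigma> where "\<sigma> l = (if l = i then s1 else if l = j then s2 else s3)" for l
    define \<tau> where "\<tau> l = (if l = j then i else l)" for l
    have "distinct_solution a J A (\<lambda>l. \<sigma> l (\<tau> l))"
    proof (rule distinct_solution_from_blocks[OF S])
      show "\<sigma> l \<in> S \<and> \<tau> l \<in> J - {j}" if "l \<in> J" for l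
        using that s J by (auto simp: \<sigma>_def \<tau>_def)
      show "inj_on (\<lambda>l. (\<sigma> l, \<tau> l)) J"
        using False J by (auto simp: inj_on_def \<sigma>_def \<tau>_def)
      have "(\<Sum>l\<in>J - {i, j}. a l * \<sigma> l (\<tau> l) t) = (\<Sum>l\<in>J - {i, j}. a l * s3 l t)" for t
        by (rule sum.cong) (auto simp: \<sigma>_def \<tau>_def)
      then show "\<forall>t. (\<Sum>l\<in>J. a l * \<sigma> l (\<tau> l) t) = 0"
        using eq J by (simp add: sum_remove_two[OF J] \<sigma>_def \<tau>_def add.assoc)
    qed
    with no_solution show ?thesis by blast
  qed
qed

lemma avoidance_bound_merged_pair:
  fixes a :: "nat \<Rightarrow> 'a::{field,finite}"
  assumes J: "finite J" "i \<in> J" "j \<in> J" "i \<noteq> j" and nz: "a i + a j \<noteq> 0"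
    and K: "avoidance_bound (a(i := a i + a j)) (J - {j}) K"
  shows "avoidance_bound a J (K + 3 * card J)"
  unfolding avoidance_bound_def
proof (intro allI impI)
  fix n and A :: "(nat \<Rightarrow> 'a) set"
  assume A: "A \<subseteq> fvecs n" and no_solution: "\<nexists>x. distinct_solution a J A x"
  let ?M = "card (low_degree_exponents CARD('a) n)"
  let ?P = "\<lambda>u. \<forall>t. (a i + a j) * u i t + (\<Sum>l\<in>J - {i, j}. a l * u l t) = 0"
  have "card A \<le> K * ?M + card (J - {j}) * (3 * ?M)"
  proof (rule card_le_by_block_packing[where P = ?P])
    show "finite A" using A finite_fvecs finite_subset by blast
    show "finite (J - {j})" "J - {j} \<noteq> {}" using J by auto
    fix B assume "B \<subseteq> A" "K * ?M < card B"
    then obtain x where x: "distinct_solution (a(i := a i + a j)) (J - {j}) B x"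
      using avoidance_boundD[OF K order_trans[OF _ A]] by blast
    have "(\<Sum>l\<in>J - {j}. (a(i := a i + a j)) l * x l t)
        = (a i + a j) * x i t + (\<Sum>l\<in>J - {i, j}. a l * x l t)" for t
      by (rule sum_merge_coefficients[OF J])
    then have "?P x" using x unfolding distinct_solution_def by metis
    moreover have "inj_on x (J - {j})" "x ` (J - {j}) \<subseteq> B"
      using x by (auto simp: distinct_solution_def)
    ultimately show "\<exists>u. ?P u \<and> inj_on u (J - {j}) \<and> u ` (J - {j}) \<subseteq> B" by blast
  next
    fix S assume "block_packing (J - {j}) A ?P S"
    then show "card S \<le> 3 * ?M"
      using merged_pair_packing_tricolored[OF J nz A no_solution]
      by (intro tricolored_sum_free_card_le) (auto simp: block_packing_def)
  qed
  also have "\<dots> \<le> (K + 3 * card J) * ?M"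
    using J by (simp add: card_Diff1_le algebra_simps)
  finally show "card A \<le> (K + 3 * card J) * ?M" .
qed

lemma exists_block_extending_solution:
  fixes a :: "nat \<Rightarrow> 'a::field"
  assumes J: "finite J" "i \<in> J" "j \<in> J" "i \<noteq> j"
    and x: "distinct_solution a (J - {i, j}) B x" and large: "card J < card B"
  shows "\<exists>u. (\<forall>t. (\<Sum>l\<in>J - {i, j}. a l * u l t) = 0) \<and> inj_on u (J - {j}) \<and> u ` (J - {j}) \<subseteq> B"
proof -
  have "card (x ` (J - {i, j})) \<le> card J"
    using card_image_le[of "J - {i, j}" x] card_mono[OF J(1), of "J - {i, j}"] J(1) by simp
  then have "\<not> B \<subseteq> x ` (J - {i, j})"
    using large card_mono[of "x ` (J - {i, j})" B] J(1) by auto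
  then obtain w where w: "w \<in> B" "w \<notin> x ` (J - {i, j})" by blast
  have J': "J - {j} = insert i (J - {i, j})" using J by auto
  show ?thesis
  proof (intro exI conjI)
    have "(\<Sum>l\<in>J - {i, j}. a l * (x(i := w)) l t) = (\<Sum>l\<in>J - {i, j}. a l * x l t)" for t
      by (rule sum.cong) auto
    then show "\<forall>t. (\<Sum>l\<in>J - {i, j}. a l * (x(i := w)) l t) = 0"
      using x by (simp add: distinct_solution_def)
    have "inj_on x (J - {i, j})" using x by (simp add: distinct_solution_def)
    then have "inj_on (x(i := w)) (J - {i, j})" using w(2) by (rule inj_on_fun_updI)
    moreover have "x(i := w) ` (J - {i, j}) = x ` (J - {i, j})" by auto
    ultimately show "inj_on (x(i := w)) (J - {j})" using w(2) unfolding J' by simp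
    show "x(i := w) ` (J - {j}) \<subseteq> B" using x w unfolding J' by (auto simp: distinct_solution_def)
  qed
qed

lemma dropped_pair_packing_tricolored:
  fixes a :: "nat \<Rightarrow> 'a::field"
  assumes J: "finite J" "i \<in> J" "j \<in> J" "i \<noteq> j" and zero: "a i + a j = 0"
    and z: "z \<in> J - {i, j}" and nz: "a z \<noteq> 0"
    and A: "A \<subseteq> fvecs n" and no_solution: "\<nexists>x. distinct_solution a J A x"
    and S: "block_packing (J - {j}) A (\<lambda>u. \<forall>t. (\<Sum>l\<in>J - {i, j}. a l * u l t) = 0) S"
  shows "tricolored_sum_free n S (\<lambda>u t. a i * u i t + (\<Sum>l\<in>J - {i, j} - {z}. a l * u l t))
    (\<lambda>u t. a j * u i t) (\<lambda>u t. a z * u z t)"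
proof -
  have ai: "a i = - a j" using zero by (simp add: eq_neg_iff_add_eq_0)
  have P: "a z * u z t + (\<Sum>l\<in>J - {i, j} - {z}. a l * u l t) = 0" if "u \<in> S" for u t
    using block_packing_mem(2)[OF S that] J(1) z by (simp add: sum.remove)
  have iz: "i \<in> J - {j}" "z \<in> J - {j}" using J z by auto
  show ?thesis
  proof (rule tricolored_sum_freeI)
    fix u t assume u: "u \<in> S"
    show "(\<lambda>t. a i * u i t + (\<Sum>l\<in>J - {i, j} - {z}. a l * u l t)) \<in> fvecs n \<and> (\<lambda>t. a j * u i t) \<in> fvecs n
        \<and> (\<lambda>t. a z * u z t) \<in> fvecs n"
      using block_packing_mem(1)[OF S u] iz A by (auto intro!: fvecs_add fvecs_scale fvecs_lincomb)
    show "a i * u i t + (\<Sum>l\<in>J - {i, j} - {z}. a l * u l t) + a j * u i t + a z * u z t = 0"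
      using P[OF u, of t] by (simp add: ai algebra_simps)
  next
    fix s1 s2 s3 assume s: "s1 \<in> S" "s2 \<in> S" "s3 \<in> S"
      and eq: "\<forall>t. a i * s1 i t + (\<Sum>l\<in>J - {i, j} - {z}. a l * s1 l t) + a j * s2 i t + a z * s3 z t = 0"
    have "a j * (s2 i t - s1 i t) + a z * (s3 z t - s1 z t) = 0" for t
    proof -
      have "a j * (s2 i t - s1 i t) + a z * (s3 z t - s1 z t)
          = (a i * s1 i t + (\<Sum>l\<in>J - {i, j} - {z}. a l * s1 l t) + a j * s2 i t + a z * s3 z t)
            - (a z * s1 z t + (\<Sum>l\<in>J - {i, j} - {z}. a l * s1 l t))"
        by (simp add: ai algebra_simps)
      then show ?thesis using eq P[OF s(1), of t] by simp
    qed
    then have "s1 = s2 \<Longrightarrow> s3 z = s1 z" using nz by (auto simp: fun_eq_iff)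
    then have collapse: "s1 = s2 \<Longrightarrow> s1 = s3" using block_packing_apply_eq_iff[OF S] s iz by auto
    show "s1 = s2 \<and> s2 = s3"
    proof (rule ccontr)
      assume "\<not> (s1 = s2 \<and> s2 = s3)"
      then have "s1 \<noteq> s2" using collapse by blast
      \<comment> \<open>Reading \<open>s1\<close> at \<open>i\<close> and on \<open>J - {i, j} - {z}\<close>, \<open>s2\<close> at \<open>i\<close> for \<open>j\<close>, and \<open>s3\<close> at \<open>z\<close> gives a solution.\<close>
      define \<sigma> where "\<sigma> l = (if l = j then s2 else if l = z then s3 else s1)" for l
      define \<tau> where "\<tau> l = (if l = j then i else l)" for l
      have "distinct_solution a J A (\<lambda>l. \<sigma> l (\<tau> l))"
      proof (rule distinct_solution_from_blocks[OF S])
        show "\<sigma> l \<in> S \<and> \<tau> l \<in> J - {j}" if "l \<in> J" for l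
          using that s J by (auto simp: \<sigma>_def \<tau>_def)
        show "inj_on (\<lambda>l. (\<sigma> l, \<tau> l)) J"
          using \<open>s1 \<noteq> s2\<close> J z by (auto simp: inj_on_def \<sigma>_def \<tau>_def)
        have "(\<Sum>l\<in>J - {i, j} - {z}. a l * \<sigma> l (\<tau> l) t) = (\<Sum>l\<in>J - {i, j} - {z}. a l * s1 l t)" for t
          by (rule sum.cong) (auto simp: \<sigma>_def \<tau>_def)
        then show "\<forall>t. (\<Sum>l\<in>J. a l * \<sigma> l (\<tau> l) t) = 0"
          using eq J z by (simp add: sum_remove_two[OF J] sum.remove \<sigma>_def \<tau>_def algebra_simps)
      qed
      with no_solution show False by blast
    qed
  qed
qed

lemma avoidance_bound_dropped_pair:
  fixes a :: "nat \<Rightarrow> 'a::{field,finite}"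
  assumes J: "finite J" "i \<in> J" "j \<in> J" "i \<noteq> j" and zero: "a i + a j = 0"
    and z: "z \<in> J - {i, j}" and nz: "a z \<noteq> 0"
    and K: "avoidance_bound a (J - {i, j}) K"
  shows "avoidance_bound a J (K + 4 * card J)"
  unfolding avoidance_bound_def
proof (intro allI impI)
  fix n and A :: "(nat \<Rightarrow> 'a) set"
  assume A: "A \<subseteq> fvecs n" and no_solution: "\<nexists>x. distinct_solution a J A x"
  let ?M = "card (low_degree_exponents CARD('a) n)"
  let ?P = "\<lambda>u. \<forall>t. (\<Sum>l\<in>J - {i, j}. a l * u l t) = 0"
  have "card A \<le> (K * ?M + card J) + card (J - {j}) * (3 * ?M)"
  proof (rule card_le_by_block_packing[where P = ?P])
    show "finite A" using A finite_fvecs finite_subset by blast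
    show "finite (J - {j})" "J - {j} \<noteq> {}" using J by auto
    fix B assume B: "B \<subseteq> A" "K * ?M + card J < card B"
    then obtain x where "distinct_solution a (J - {i, j}) B x"
      using avoidance_boundD[OF K order_trans[OF _ A]] by fastforce
    then show "\<exists>u. ?P u \<and> inj_on u (J - {j}) \<and> u ` (J - {j}) \<subseteq> B"
      using B(2) by (intro exists_block_extending_solution[OF J]) auto
  next
    fix S assume "block_packing (J - {j}) A ?P S"
    then show "card S \<le> 3 * ?M"
      using dropped_pair_packing_tricolored[OF J zero z nz A no_solution]
      by (intro tricolored_sum_free_card_le) (auto simp: block_packing_def)
  qed
  also have "\<dots> \<le> K * ?M + card J * ?M + card J * (3 * ?M)"
  proof -
    have "card (J - {j}) * (3 * ?M) \<le> card J * (3 * ?M)" by (rule mult_le_mono1) (rule card_Diff1_le)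
    moreover have "card J \<le> card J * ?M" using card_low_degree_exponents_pos[of "CARD('a)" n] by simp
    ultimately show ?thesis by linarith
  qed
  also have "\<dots> = (K + 4 * card J) * ?M" by (simp add: algebra_simps)
  finally show "card A \<le> (K + 4 * card J) * ?M" .
qed

lemma paired_four_packing_tricolored:
  fixes a :: "nat \<Rightarrow> 'a::field"
  assumes J: "J = {j1, j2, j3, j4}" and distinct: "distinct [j1, j2, j3, j4]"
    and zero: "a j1 + a j2 = 0" "a j3 + a j4 = 0" and nz: "a j2 \<noteq> 0" "a j4 \<noteq> 0"
    and A: "A \<subseteq> fvecs n" and no_solution: "\<nexists>x. distinct_solution a J A x"
    and S: "block_packing {j1, j3} A (\<lambda>_. True) S"
  shows "tricolored_sum_free n S (\<lambda>u t. a j1 * u j1 t + a j3 * u j3 t) (\<lambda>u t. a j2 * u j1 t)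
    (\<lambda>u t. a j4 * u j3 t)"
proof -
  have a1: "a j1 = - a j2" and a3: "a j3 = - a j4" using zero by (simp_all add: eq_neg_iff_add_eq_0)
  show ?thesis
  proof (rule tricolored_sum_freeI)
    fix u t assume u: "u \<in> S"
    show "(\<lambda>t. a j1 * u j1 t + a j3 * u j3 t) \<in> fvecs n \<and> (\<lambda>t. a j2 * u j1 t) \<in> fvecs n
        \<and> (\<lambda>t. a j4 * u j3 t) \<in> fvecs n"
      using block_packing_mem(1)[OF S u] A by (auto intro!: fvecs_add fvecs_scale)
    show "a j1 * u j1 t + a j3 * u j3 t + a j2 * u j1 t + a j4 * u j3 t = 0" by (simp add: a1 a3)
  next
    fix s1 s2 s3 assume s: "s1 \<in> S" "s2 \<in> S" "s3 \<in> S"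
      and eq: "\<forall>t. a j1 * s1 j1 t + a j3 * s1 j3 t + a j2 * s2 j1 t + a j4 * s3 j3 t = 0"
    have "\<forall>t. a j2 * (s2 j1 t - s1 j1 t) + a j4 * (s3 j3 t - s1 j3 t) = 0"
      using eq by (simp add: a1 a3 algebra_simps)
    then have "s1 = s2 \<Longrightarrow> s3 j3 = s1 j3" "s1 = s3 \<Longrightarrow> s2 j1 = s1 j1"
      using nz by (auto simp: fun_eq_iff)
    then have collapse: "s1 = s2 \<Longrightarrow> s1 = s3" "s1 = s3 \<Longrightarrow> s1 = s2"
      using block_packing_apply_eq_iff[OF S] s by auto
    show "s1 = s2 \<and> s2 = s3"
    proof (rule ccontr)
      assume "\<not> (s1 = s2 \<and> s2 = s3)"
      then have "s1 \<noteq> s2" "s1 \<noteq> s3" using collapse by blast+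
      \<comment> \<open>\<open>s1\<close> supplies the vectors at \<open>j1\<close> and \<open>j3\<close>, \<open>s2\<close> and \<open>s3\<close> those at their partners \<open>j2\<close> and \<open>j4\<close>.\<close>
      define \<sigma> where "\<sigma> l = (if l = j2 then s2 else if l = j4 then s3 else s1)" for l
      define \<tau> where "\<tau> l = (if l = j2 then j1 else if l = j4 then j3 else l)" for l
      have "distinct_solution a J A (\<lambda>l. \<sigma> l (\<tau> l))"
      proof (rule distinct_solution_from_blocks[OF S])
        show "\<sigma> l \<in> S \<and> \<tau> l \<in> {j1, j3}" if "l \<in> J" for l
          using that s J distinct by (auto simp: \<sigma>_def \<tau>_def)
        show "inj_on (\<lambda>l. (\<sigma> l, \<tau> l)) J"
          using \<open>s1 \<noteq> s2\<close> \<open>s1 \<noteq> s3\<close> J distinct by (auto simp: inj_on_def \<sigma>_def \<tau>_def)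
        show "\<forall>t. (\<Sum>l\<in>J. a l * \<sigma> l (\<tau> l) t) = 0"
          using eq J distinct by (simp add: \<sigma>_def \<tau>_def algebra_simps)
      qed
      with no_solution show False by blast
    qed
  qed
qed

lemma avoidance_bound_paired_four:
  fixes a :: "nat \<Rightarrow> 'a::{field,finite}"
  assumes J: "J = {j1, j2, j3, j4}" and distinct: "distinct [j1, j2, j3, j4]"
    and zero: "a j1 + a j2 = 0" "a j3 + a j4 = 0" and nz: "a j2 \<noteq> 0" "a j4 \<noteq> 0"
  shows "avoidance_bound a J 7"
  unfolding avoidance_bound_def
proof (intro allI impI)
  fix n and A :: "(nat \<Rightarrow> 'a) set"
  assume A: "A \<subseteq> fvecs n" and no_solution: "\<nexists>x. distinct_solution a J A x"
  let ?M = "card (low_degree_exponents CARD('a) n)"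
  have "card A \<le> 1 + card {j1, j3} * (3 * ?M)"
  proof (rule card_le_by_block_packing[where P = "\<lambda>_. True"])
    show finite_A: "finite A" using A finite_fvecs finite_subset by blast
    fix B :: "(nat \<Rightarrow> 'a) set" assume B: "B \<subseteq> A" "1 < card B"
    have "finite B" using B(1) finite_A by (rule finite_subset)
    then obtain b1 b2 where "b1 \<in> B" "b2 \<in> B" "b1 \<noteq> b2"
      using B(2) card_le_Suc0_iff_eq[of B] by force
    moreover have "j1 \<noteq> j3" using distinct by simp
    ultimately show "\<exists>u. True \<and> inj_on u {j1, j3} \<and> u ` {j1, j3} \<subseteq> B"
      by (intro exI[of _ "\<lambda>l. if l = j1 then b1 else b2"]) simp
  next
    fix S assume "block_packing {j1, j3} A (\<lambda>_. True) S"
    then show "card S \<le> 3 * ?M"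
      using paired_four_packing_tricolored[OF J distinct zero nz A no_solution]
      by (intro tricolored_sum_free_card_le) (auto simp: block_packing_def)
  qed simp_all
  also have "\<dots> \<le> 7 * ?M"
    using distinct card_low_degree_exponents_pos[of "CARD('a)" n] by simp
  finally show "card A \<le> 7 * ?M" .
qed

lemma obtain_elements_card_4:
  assumes "card J = 4"
  obtains j1 j2 j3 j4 where "J = {j1, j2, j3, j4}" "distinct [j1, j2, j3, j4]"
proof -
  have "finite J" using assms card.infinite by fastforce
  obtain j1 where j1: "j1 \<in> J" using assms by fastforce
  have "card (J - {j1}) = 3" using assms j1 \<open>finite J\<close> by simp
  then obtain j2 j3 j4 where "J - {j1} = {j2, j3, j4}" "j2 \<noteq> j3" "j3 \<noteq> j4" "j2 \<noteq> j4"
    by (auto simp: card_3_iff)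
  with j1 show thesis by (intro that[of j1 j2 j3 j4]) auto
qed

lemma exists_avoidance_bound:
  fixes a :: "nat \<Rightarrow> 'a::{field,finite}"
  assumes "finite J" "3 \<le> card J" "\<forall>j\<in>J. a j \<noteq> 0" "(\<Sum>j\<in>J. a j) = 0"
  shows "\<exists>K. avoidance_bound a J K"
  using assms
proof (induction "card J" arbitrary: J a rule: less_induct)
  case less
  note J = less.prems
  show ?case
  proof (cases "card J = 3")
    case True
    then obtain j1 j2 j3 where J3: "J = {j1, j2, j3}" "j1 \<noteq> j2" "j2 \<noteq> j3" "j1 \<noteq> j3"
      by (auto simp: card_3_iff)
    moreover from J3 have "a j1 + a j2 + a j3 = 0" using J(4) by (simp add: add.assoc)
    ultimately show ?thesis using J(3) by (metis avoidance_bound_three insertCI)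
  next
    case False
    show ?thesis
    proof (cases "\<exists>i\<in>J. \<exists>j\<in>J. i \<noteq> j \<and> a i + a j \<noteq> 0")
      case True
      then obtain i j where ij: "i \<in> J" "j \<in> J" "i \<noteq> j" "a i + a j \<noteq> 0" by blast
      have "\<exists>K. avoidance_bound (a(i := a i + a j)) (J - {j}) K"
      proof (rule less.hyps)
        show "(\<Sum>l\<in>J - {j}. (a(i := a i + a j)) l) = 0"
          using sum_merge_coefficients[OF J(1) ij(1-3), of a "\<lambda>_. 1"] sum_remove_two[OF J(1) ij(1-3), of a] J(4)
          by (simp add: add.assoc)
        show "card (J - {j}) < card J" "3 \<le> card (J - {j})" using J(1,2) False ij by simp_all
        show "finite (J - {j})" "\<forall>l\<in>J - {j}. (a(i := a i + a j)) l \<noteq> 0" using J(1,3) ij by auto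
      qed
      then show ?thesis using avoidance_bound_merged_pair[OF J(1) ij] by blast
    next
      case cancel: False
      show ?thesis
      proof (cases "card J = 4")
        case True
        then obtain j1 j2 j3 j4 where J4: "J = {j1, j2, j3, j4}" and distinct: "distinct [j1, j2, j3, j4]"
          by (rule obtain_elements_card_4)
        have "a j1 + a j2 = 0" "a j3 + a j4 = 0" using cancel distinct unfolding J4 by auto
        moreover have "a j2 \<noteq> 0" "a j4 \<noteq> 0" using J(3) unfolding J4 by auto
        ultimately show ?thesis using avoidance_bound_paired_four[OF J4 distinct] by blast
      next
        case False
        obtain T where "T \<subseteq> J" "card T = 3" using obtain_subset_with_card_n[OF J(2)] by blast
        then obtain i j z where ij: "i \<in> J" "j \<in> J" "i \<noteq> j" and z: "z \<in> J - {i, j}"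
          by (auto simp: card_3_iff)
        have zero: "a i + a j = 0" and "a z \<noteq> 0" using cancel ij z J(3) by auto
        have "\<exists>K. avoidance_bound a (J - {i, j}) K"
        proof (rule less.hyps)
          show "card (J - {i, j}) < card J" "3 \<le> card (J - {i, j})"
            using J(1,2) \<open>card J \<noteq> 3\<close> False ij by (simp_all add: card_Diff_subset)
          show "finite (J - {i, j})" "\<forall>l\<in>J - {i, j}. a l \<noteq> 0" using J(1,3) by simp_all
          show "(\<Sum>l\<in>J - {i, j}. a l) = 0"
            using sum_remove_two[OF J(1) ij, of a] J(4) zero by (simp add: add.assoc[symmetric])
        qed
        then show ?thesis using avoidance_bound_dropped_pair[OF J(1) ij zero z \<open>a z \<noteq> 0\<close>] by blast
      qed
    qed
  qed
qed

lemma eventually_mult_power_less: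
  fixes G c K :: real
  assumes "0 < G" "G < c"
  shows "\<exists>N. \<forall>n\<ge>N. K * G ^ n < c ^ n"
proof -
  have "(\<lambda>n. K * (G / c) ^ n) \<longlonglongrightarrow> 0"
    using assms by (intro tendsto_mult_right_zero LIMSEQ_power_zero) auto
  then have "\<forall>\<^sub>F n in sequentially. K * (G / c) ^ n < 1"
    by (rule order_tendstoD) simp
  then obtain N where N: "\<And>n. N \<le> n \<Longrightarrow> K * (G / c) ^ n < 1"
    by (auto simp: eventually_sequentially)
  have "K * G ^ n < c ^ n" if "N \<le> n" for n
    using N[OF that] assms by (simp add: field_simps)
  then show ?thesis by blast
qed

lemma avoidance_bound_exponential:
  fixes a :: "nat \<Rightarrow> 'a::{field,finite}"
  assumes K: "avoidance_bound a J K"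
  obtains c :: real and N where "c < CARD('a)"
    "\<And>n A. N \<le> n \<Longrightarrow> A \<subseteq> fvecs n \<Longrightarrow> c ^ n < card A \<Longrightarrow> \<exists>x. distinct_solution a J A x"
proof -
  obtain G :: real where G: "0 < G" "G < CARD('a)" "\<And>n. card (low_degree_exponents CARD('a) n) \<le> G ^ n"
    using card_low_degree_exponents_exponential_bound[OF two_le_card_field[where 'a = 'a]] by blast
  define c where "c = (G + CARD('a)) / 2"
  have c: "G < c" "c < CARD('a)" using G(2) by (simp_all add: c_def)
  obtain N where N: "\<And>n. N \<le> n \<Longrightarrow> K * G ^ n < c ^ n"
    using eventually_mult_power_less[OF G(1) c(1)] by blast
  have "\<exists>x. distinct_solution a J A x" if "N \<le> n" "A \<subseteq> fvecs n" "c ^ n < card A" for n A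
  proof (rule avoidance_boundD[OF K that(2)])
    have "real (K * card (low_degree_exponents CARD('a) n)) \<le> K * G ^ n"
      using G(3)[of n] by (simp add: mult_left_mono)
    also have "\<dots> < card A" using N[OF that(1)] that(3) by linarith
    finally show "K * card (low_degree_exponents CARD('a) n) < card A" by linarith
  qed
  with c(2) show thesis by (rule that)
qed

theorem theorem2:
  fixes a :: "nat \<Rightarrow> 'a::{field,finite}" and d :: nat
  assumes "d \<ge> 4"
    and "\<forall>j<d. a j \<noteq> 0"
    and "(\<Sum>j<d. a j) = 0"
  shows "\<exists>c::real. c < real (card (UNIV :: 'a set)) \<and>
    (\<exists>N. \<forall>n\<ge>N. \<forall>A. A \<subseteq> fvecs n \<and> real (card A) > c ^ n \<longrightarrow>
       (\<exists>x :: nat \<Rightarrow> nat \<Rightarrow> 'a. (\<forall>j<d. x j \<in> A) \<and> inj_on x {..<d} \<and>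
            (\<forall>i. (\<Sum>j<d. a j * x j i) = 0)))"
proof -
  have "\<exists>K. avoidance_bound a {..<d} K"
    by (rule exists_avoidance_bound) (use assms in simp_all)
  then obtain K where "avoidance_bound a {..<d} K" ..
  then obtain c :: real and N where "c < CARD('a)"
    and solution: "\<And>n A. N \<le> n \<Longrightarrow> A \<subseteq> fvecs n \<Longrightarrow> c ^ n < card A \<Longrightarrow> \<exists>x. distinct_solution a {..<d} A x"
    by (rule avoidance_bound_exponential) auto
  show ?thesis
  proof (intro exI[of _ c] conjI exI[of _ N] allI impI)
    show "c < real CARD('a)" by fact
    fix n and A :: "(nat \<Rightarrow> 'a) set"
    assume "N \<le> n" "A \<subseteq> fvecs n \<and> c ^ n < real (card A)"
    then obtain x where "distinct_solution a {..<d} A x" using solution by blast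
    then show "\<exists>x. (\<forall>j<d. x j \<in> A) \<and> inj_on x {..<d} \<and> (\<forall>i. (\<Sum>j<d. a j * x j i) = 0)"
      unfolding distinct_solution_def by auto
  qed
qed

end
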